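(* Let $f:[0,\infty)\to\mathbb{C}$ be smooth with support in $[0,\rho]$ for some $\rho<1$. For $i,j\in\mathbb{N}_0$ and $t\in(0,1)$ let $$G_{i,j}(t)=\int_{1-t}^{1}u f(u)\,[Q(t,u)]^{i}\,(u^{2}+1-t^{2})^{j}\,\mathrm{d}u,\qquad Q(t,u)=((1+t)^2-u^2)(u^2-(1-t)^2),$$ and $h_k(t)=G_{k,0}(t)=\int_{1-t}^{1}uf(u)[Q(t,u)]^k\,\mathrm{d}u$. Then for every $k\geq 1$ and $t\in(0,1)$, $$\left[D^{2k}h_{k}\right](t)=\left[D^{2k}G_{k,0}\right](t)=k!\,4^{k}\sum_{j=0}^{k-1}(-1)^{j}\frac{(k-1+j)!}{(k-1-j)!\,j!}\left[D^{k-j}G_{0,k-j}\right](t).$$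
   Context: $D$ denotes the operator $(D\varphi)(t)=\frac{1}{t}\varphi'(t)$ and $D^{j}$ its $j$-fold iterate. *)

theory Defs
  imports "HOL-Analysis.Analysis"
begin

definition Dop :: "(real \<Rightarrow> complex) \<Rightarrow> real \<Rightarrow> complex" where
  "Dop \<phi> t = vector_derivative \<phi> (at t) / complex_of_real t"

definition smooth_on_nonneg :: "(real \<Rightarrow> complex) \<Rightarrow> bool" where
  "smooth_on_nonneg f \<longleftrightarrow>
     (\<exists>fd :: nat \<Rightarrow> real \<Rightarrow> complex.
        (\<forall>x\<ge>0. fd 0 x = f x) \<and>
        (\<forall>n. \<forall>x\<ge>0. (fd n has_vector_derivative fd (Suc n) x) (at x within {0..})))"

definition Qfun :: "real \<Rightarrow> real \<Rightarrow> real" where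
  "Qfun t u = ((1 + t)^2 - u^2) * (u^2 - (1 - t)^2)"

definition Gfun :: "(real \<Rightarrow> complex) \<Rightarrow> nat \<Rightarrow> nat \<Rightarrow> real \<Rightarrow> complex" where
  "Gfun f i j t = integral {1 - t..1}
     (\<lambda>u. complex_of_real (u * (Qfun t u) ^ i * (u^2 + 1 - t^2) ^ j) * f u)"

definition hfun :: "(real \<Rightarrow> complex) \<Rightarrow> nat \<Rightarrow> real \<Rightarrow> complex" where
  "hfun f k t = integral {1 - t..1} (\<lambda>u. complex_of_real (u * (Qfun t u) ^ k) * f u)"

end

theory Submission
  imports Defs "HOL-Computational_Algebra.Polynomial"
begin

text \<open>
  The weight \<open>u Q(t,u)\<^sup>i (u\<^sup>2 + 1 - t\<^sup>2)\<^sup>j\<close> of \<open>G\<^bsub>i,j\<^esub>\<close> is a polynomial in \<open>t\<close> with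
  continuous coefficients, so \<open>G\<^bsub>i,j\<^esub>\<close> may be differentiated under the integral sign.
  Since \<open>\<partial>\<^sub>t Q = 4t(u\<^sup>2 + 1 - t\<^sup>2)\<close> and \<open>Q\<close> vanishes at the lower limit \<open>u = 1 - t\<close>,
  this gives \<open>D G\<^bsub>i+1,j\<^esub> = 4(i+1) G\<^bsub>i,j+1\<^esub> - 2j G\<^bsub>i+1,j-1\<^esub>\<close>. Unwinding this recursion
  until the first index reaches 0 writes \<open>D\<^sup>n G\<^bsub>a,j\<^esub>\<close> as a combination of the
  \<open>D\<^bsup>n-a-r\<^esup> G\<^bsub>0,a+j-r\<^esub>\<close>. For \<open>j = 0\<close> the coefficients obey the recursion of the
  Bessel numbers \<open>(a-1+r)!/((a-1-r)! r! 2\<^sup>r)\<close>, which yields the closed form. Smoothness of \<open>f\<close>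
  is needed only to keep every function in sight smooth, so that \<open>D\<close> acts linearly on them.
\<close>

section \<open>Smooth functions on open sets\<close>

fun times_differentiable_on :: "nat \<Rightarrow> real set \<Rightarrow> (real \<Rightarrow> 'a::real_normed_vector) \<Rightarrow> bool" where
  "times_differentiable_on 0 S F \<longleftrightarrow> True"
| "times_differentiable_on (Suc n) S F \<longleftrightarrow>
     (\<exists>F'. (\<forall>t\<in>S. (F has_vector_derivative F' t) (at t)) \<and> times_differentiable_on n S F')"

definition smooth_on :: "real set \<Rightarrow> (real \<Rightarrow> 'a::real_normed_vector) \<Rightarrow> bool" where
  "smooth_on S F \<longleftrightarrow> (\<forall>n. times_differentiable_on n S F)"

lemma times_differentiable_on_cong:
  assumes "times_differentiable_on n S F" "open S" "\<And>t. t \<in> S \<Longrightarrow> F t = G t"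
  shows "times_differentiable_on n S G"
proof (cases n)
  case (Suc m)
  then obtain F' where "\<forall>t\<in>S. (F has_vector_derivative F' t) (at t)" "times_differentiable_on m S F'"
    using assms(1) by auto
  with assms(2,3) Suc show ?thesis
    by (auto intro: has_vector_derivative_transform_within_open)
qed simp

lemma times_differentiable_on_subset:
  "times_differentiable_on n T F \<Longrightarrow> S \<subseteq> T \<Longrightarrow> times_differentiable_on n S F"
  by (induction n arbitrary: F) auto

lemma smooth_on_subset: "smooth_on T F \<Longrightarrow> S \<subseteq> T \<Longrightarrow> smooth_on S F"
  unfolding smooth_on_def by (blast intro: times_differentiable_on_subset)

lemma times_differentiable_on_SucD:
  "times_differentiable_on (Suc n) S F \<Longrightarrow> times_differentiable_on n S F"
  by (induction n arbitrary: F) auto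

lemma times_differentiable_on_const: "times_differentiable_on n S (\<lambda>t. c)"
  by (induction n arbitrary: c) (auto intro!: exI[of _ "\<lambda>t. 0"] derivative_eq_intros)

lemma times_differentiable_on_id: "times_differentiable_on n S (\<lambda>t. t)"
  by (cases n) (auto intro!: exI[of _ "\<lambda>t. 1"] derivative_eq_intros times_differentiable_on_const)

lemma times_differentiable_on_add:
  "times_differentiable_on n S F \<Longrightarrow> times_differentiable_on n S G \<Longrightarrow>
     times_differentiable_on n S (\<lambda>t. F t + G t)"
proof (induction n arbitrary: F G)
  case (Suc n)
  then obtain F' G' where "\<forall>t\<in>S. (F has_vector_derivative F' t) (at t)" "times_differentiable_on n S F'"
    "\<forall>t\<in>S. (G has_vector_derivative G' t) (at t)" "times_differentiable_on n S G'"
    by auto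
  with Suc.IH show ?case
    by (auto intro!: exI[of _ "\<lambda>t. F' t + G' t"] derivative_eq_intros)
qed simp

lemma times_differentiable_on_diff:
  "times_differentiable_on n S F \<Longrightarrow> times_differentiable_on n S G \<Longrightarrow>
     times_differentiable_on n S (\<lambda>t. F t - G t)"
proof (induction n arbitrary: F G)
  case (Suc n)
  then obtain F' G' where "\<forall>t\<in>S. (F has_vector_derivative F' t) (at t)" "times_differentiable_on n S F'"
    "\<forall>t\<in>S. (G has_vector_derivative G' t) (at t)" "times_differentiable_on n S G'"
    by auto
  with Suc.IH show ?case
    by (auto intro!: exI[of _ "\<lambda>t. F' t - G' t"] derivative_eq_intros)
qed simp

lemma times_differentiable_on_mult:
  fixes F G :: "real \<Rightarrow> 'a::real_normed_algebra"
  shows "times_differentiable_on n S F \<Longrightarrow> times_differentiable_on n S G \<Longrightarrow>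
     times_differentiable_on n S (\<lambda>t. F t * G t)"
proof (induction n arbitrary: F G)
  case (Suc n)
  then obtain F' G' where F': "\<forall>t\<in>S. (F has_vector_derivative F' t) (at t)" "times_differentiable_on n S F'"
    and G': "\<forall>t\<in>S. (G has_vector_derivative G' t) (at t)" "times_differentiable_on n S G'"
    by auto
  have "times_differentiable_on n S F" "times_differentiable_on n S G"
    using Suc.prems times_differentiable_on_SucD by blast+
  with F' G' have "times_differentiable_on n S (\<lambda>t. F t * G' t + F' t * G t)"
    by (intro times_differentiable_on_add Suc.IH)
  with F' G' show ?case
    by (auto intro!: exI[of _ "\<lambda>t. F t * G' t + F' t * G t"] has_vector_derivative_mult)
qed simp

lemma times_differentiable_on_of_real:
  "times_differentiable_on n S F \<Longrightarrow>
     times_differentiable_on n S (\<lambda>t. of_real (F t) :: 'a::real_normed_algebra_1)"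
proof (induction n arbitrary: F)
  case (Suc n)
  then obtain F' where "\<forall>t\<in>S. (F has_real_derivative F' t) (at t)" "times_differentiable_on n S F'"
    by (auto simp: has_real_derivative_iff_has_vector_derivative)
  with Suc.IH show ?case
    by (auto intro!: exI[of _ "\<lambda>t. of_real (F' t)"] has_vector_derivative_of_real)
qed simp

lemma times_differentiable_on_power:
  fixes F :: "real \<Rightarrow> 'a::real_normed_algebra_1"
  shows "times_differentiable_on n S F \<Longrightarrow> times_differentiable_on n S (\<lambda>t. F t ^ m)"
  by (induction m) (auto intro: times_differentiable_on_const times_differentiable_on_mult)

lemma times_differentiable_on_inverse:
  assumes "0 \<notin> S"
  shows "times_differentiable_on n S (\<lambda>t. inverse t)"
proof (induction n)
  case (Suc n)
  have "((\<lambda>t. inverse t) has_vector_derivative - (inverse t * inverse t)) (at t)" if "t \<in> S" for t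
    using that assms
    by (auto intro!: derivative_eq_intros simp: has_real_derivative_iff_has_vector_derivative[symmetric]
        power2_eq_square field_simps)
  moreover have "times_differentiable_on n S (\<lambda>t. - 1 * (inverse t * inverse t))"
    using Suc by (intro times_differentiable_on_mult times_differentiable_on_const)
  ultimately show ?case
    by (auto intro!: exI[of _ "\<lambda>t. - (inverse t * inverse t)"])
qed simp

lemmas times_differentiable_on_intros = times_differentiable_on_const times_differentiable_on_id
  times_differentiable_on_add times_differentiable_on_diff times_differentiable_on_mult
  times_differentiable_on_power times_differentiable_on_of_real

lemma smooth_on_nonneg_continuous_on:
  assumes "smooth_on_nonneg f"
  shows "continuous_on {0..} f"
proof -
  obtain fd where fd0: "\<forall>x\<ge>0. fd 0 x = f x"
    and fd: "\<forall>n. \<forall>x\<ge>0. (fd n has_vector_derivative fd (Suc n) x) (at x within {0..})"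
    using assms unfolding smooth_on_nonneg_def by blast
  have "continuous (at x within {0..}) (fd 0)" if "x \<in> {0..}" for x
    using has_vector_derivative_continuous[OF fd[rule_format, of x 0]] that by simp
  then have "continuous_on {0..} (fd 0)"
    by (simp add: continuous_on_eq_continuous_within)
  then show ?thesis
    by (rule continuous_on_eq) (use fd0 in auto)
qed

lemma smooth_on_nonneg_reflect:
  assumes "smooth_on_nonneg f"
  shows "smooth_on {..<c} (\<lambda>t. f (c - t))"
proof -
  obtain fd where fd0: "\<forall>x\<ge>0. fd 0 x = f x"
    and fd: "\<forall>n. \<forall>x\<ge>0. (fd n has_vector_derivative fd (Suc n) x) (at x within {0..})"
    using assms unfolding smooth_on_nonneg_def by blast
  have fd_reflect: "times_differentiable_on n {..<c} (\<lambda>t. fd m (c - t))" for n m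
  proof (induction n arbitrary: m)
    case (Suc n)
    have "((\<lambda>t. fd m (c - t)) has_vector_derivative - fd (Suc m) (c - t)) (at t)" if "t < c" for t
    proof -
      have "at (c - t) within {0..} = at (c - t)"
        using that by (intro at_within_interior) auto
      moreover have "(fd m has_vector_derivative fd (Suc m) (c - t)) (at (c - t) within {0..})"
        using fd that by simp
      ultimately have "(fd m has_vector_derivative fd (Suc m) (c - t)) (at (c - t))"
        by simp
      moreover have "((\<lambda>t. c - t) has_vector_derivative -1) (at t)"
        by (auto intro!: derivative_eq_intros)
      ultimately show ?thesis
        using vector_diff_chain_at by (fastforce simp: o_def)
    qed
    moreover have "times_differentiable_on n {..<c} (\<lambda>t. - 1 * fd (Suc m) (c - t))"
      using Suc.IH by (intro times_differentiable_on_intros)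
    ultimately show ?case
      by (auto intro!: exI[of _ "\<lambda>t. - fd (Suc m) (c - t)"])
  qed simp
  have "times_differentiable_on n {..<c} (\<lambda>t. f (c - t))" for n
    by (rule times_differentiable_on_cong[OF fd_reflect[of n 0] open_lessThan]) (use fd0 in simp)
  then show ?thesis
    unfolding smooth_on_def ..
qed

section \<open>The operator \<open>D\<close>\<close>

lemma Dop_cong:
  assumes "open S" "\<And>s. s \<in> S \<Longrightarrow> F s = G s" "t \<in> S"
  shows "Dop F t = Dop G t"
proof -
  have "eventually (\<lambda>s. s \<in> UNIV \<longrightarrow> F s = G s) (nhds t)"
    using eventually_nhds_in_open[OF assms(1,3)] by eventually_elim (use assms(2) in auto)
  then have "vector_derivative F (at t within UNIV) = vector_derivative G (at t within UNIV)"
    by (rule vector_derivative_cong_eq) auto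
  then show ?thesis by (simp add: Dop_def)
qed

lemma funpow_Dop_cong:
  assumes "open S" "\<And>s. s \<in> S \<Longrightarrow> F s = G s" "t \<in> S"
  shows "(Dop ^^ n) F t = (Dop ^^ n) G t"
  using assms(3)
proof (induction n arbitrary: t)
  case (Suc n)
  then show ?case by (auto intro: Dop_cong[OF assms(1)])
qed (use assms(2) in simp)

lemma Dop_eq:
  "(F has_vector_derivative F') (at t) \<Longrightarrow> Dop F t = F' / of_real t"
  by (simp add: Dop_def vector_derivative_at)

lemma times_differentiable_on_Dop:
  assumes "open S" "0 \<notin> S" "times_differentiable_on (Suc n) S F"
  shows "times_differentiable_on n S (Dop F)"
proof -
  obtain F' where F': "\<forall>t\<in>S. (F has_vector_derivative F' t) (at t)" "times_differentiable_on n S F'"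
    using assms(3) by auto
  have "times_differentiable_on n S (\<lambda>t. F' t * of_real (inverse t))"
    using F'(2) assms(2)
    by (intro times_differentiable_on_intros times_differentiable_on_inverse)
  moreover have "F' t * of_real (inverse t) = Dop F t" if "t \<in> S" for t
    using Dop_eq[OF bspec[OF F'(1) that]] by (simp add: divide_inverse)
  ultimately show ?thesis
    by (rule times_differentiable_on_cong[OF _ assms(1)])
qed

lemma smooth_on_funpow_Dop:
  "open S \<Longrightarrow> 0 \<notin> S \<Longrightarrow> smooth_on S F \<Longrightarrow> smooth_on S ((Dop ^^ n) F)"
  by (induction n) (auto simp: smooth_on_def intro: times_differentiable_on_Dop)

lemma smooth_on_has_vector_derivative:
  assumes "smooth_on S F" "t \<in> S"
  obtains F' where "(F has_vector_derivative F') (at t)"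
proof -
  have "times_differentiable_on (Suc 0) S F"
    using assms(1) unfolding smooth_on_def by blast
  with assms(2) that show ?thesis by auto
qed

lemma Dop_linear:
  assumes "smooth_on S F" "smooth_on S G" "t \<in> S"
  shows "Dop (\<lambda>s. a * F s + b * G s) t = a * Dop F t + b * Dop G t"
proof -
  obtain F' G' where F': "(F has_vector_derivative F') (at t)" and G': "(G has_vector_derivative G') (at t)"
    using smooth_on_has_vector_derivative assms by metis
  have "((\<lambda>s. a * F s + b * G s) has_vector_derivative a * F' + b * G') (at t)"
    using F' G' by (auto intro!: derivative_eq_intros)
  then show ?thesis
    using Dop_eq[OF F'] Dop_eq[OF G'] by (simp add: Dop_eq add_divide_distrib)
qed

lemma funpow_Dop_linear:
  assumes S: "open S" "0 \<notin> S" and "smooth_on S F" "smooth_on S G" "t \<in> S"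
  shows "(Dop ^^ n) (\<lambda>s. a * F s + b * G s) t = a * (Dop ^^ n) F t + b * (Dop ^^ n) G t"
  using assms(3-)
proof (induction n arbitrary: F G t)
  case (Suc n)
  have "(Dop ^^ n) (Dop (\<lambda>s. a * F s + b * G s)) t = (Dop ^^ n) (\<lambda>s. a * Dop F s + b * Dop G s) t"
    using Suc.prems by (intro funpow_Dop_cong[OF S(1)] Dop_linear)
  also have "\<dots> = a * (Dop ^^ n) (Dop F) t + b * (Dop ^^ n) (Dop G) t"
    using Suc.prems smooth_on_funpow_Dop[OF S, of _ 1] by (intro Suc.IH) simp_all
  finally show ?case
    by (simp add: funpow_Suc_right del: funpow.simps)
qed simp

section \<open>Differentiation under the integral sign\<close>

definition continuous_poly_family :: "(real \<Rightarrow> real poly) \<Rightarrow> bool" where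
  "continuous_poly_family P \<longleftrightarrow>
     (\<exists>N. \<forall>u. degree (P u) \<le> N) \<and> (\<forall>e. continuous_on UNIV (\<lambda>u. coeff (P u) e))"

lemma continuous_poly_family_const: "continuous_poly_family (\<lambda>u. p)"
  by (auto simp: continuous_poly_family_def)

lemma continuous_poly_family_pCons:
  assumes "continuous_on UNIV c"
  shows "continuous_poly_family (\<lambda>u. [:c u:])"
proof -
  have "continuous_on UNIV (\<lambda>u. coeff [:c u:] e)" for e
    using assms by (cases e) auto
  then show ?thesis
    unfolding continuous_poly_family_def by auto
qed

lemma continuous_poly_family_diff:
  assumes "continuous_poly_family P" "continuous_poly_family Q"
  shows "continuous_poly_family (\<lambda>u. P u - Q u)"
proof -
  obtain N M where "\<And>u. degree (P u) \<le> N" "\<And>u. degree (Q u) \<le> M"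
    using assms unfolding continuous_poly_family_def by blast
  then have "degree (P u - Q u) \<le> max N M" for u
    by (meson degree_diff_le le_max_iff_disj)
  with assms show ?thesis
    unfolding continuous_poly_family_def by (auto intro!: continuous_intros)
qed

lemma continuous_poly_family_mult:
  assumes "continuous_poly_family P" "continuous_poly_family Q"
  shows "continuous_poly_family (\<lambda>u. P u * Q u)"
proof -
  obtain N M where "\<And>u. degree (P u) \<le> N" "\<And>u. degree (Q u) \<le> M"
    using assms unfolding continuous_poly_family_def by blast
  then have "degree (P u * Q u) \<le> N + M" for u
    by (meson add_mono degree_mult_le order_trans)
  with assms show ?thesis
    unfolding continuous_poly_family_def coeff_mult by (auto intro!: continuous_intros)
qed

lemma continuous_poly_family_power:
  "continuous_poly_family P \<Longrightarrow> continuous_poly_family (\<lambda>u. P u ^ n)"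
  by (induction n) (auto intro: continuous_poly_family_const continuous_poly_family_mult)

lemma poly_eq_sum_upto:
  fixes p :: "'a::comm_semiring_1 poly"
  assumes "degree p \<le> N"
  shows "poly p x = (\<Sum>e\<le>N. coeff p e * x ^ e)"
proof -
  have "poly p x = poly (\<Sum>e\<le>N. monom (coeff p e) e) x"
    using poly_as_sum_of_monoms'[OF assms] by simp
  then show ?thesis
    by (simp add: poly_sum poly_monom)
qed

lemma poly_pderiv_eq_sum_upto:
  fixes p :: "real poly"
  assumes "degree p \<le> N"
  shows "poly (pderiv p) x = (\<Sum>e\<le>N. of_nat e * x ^ (e - 1) * coeff p e)"
proof -
  have "((\<lambda>x. \<Sum>e\<le>N. coeff p e * x ^ e) has_real_derivative (\<Sum>e\<le>N. of_nat e * x ^ (e - 1) * coeff p e)) (at x)"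
    by (auto intro!: derivative_eq_intros)
  moreover have "((\<lambda>x. \<Sum>e\<le>N. coeff p e * x ^ e) has_real_derivative poly (pderiv p) x) (at x)"
    using poly_DERIV[of p x] poly_eq_sum_upto[OF assms] by simp
  ultimately show ?thesis
    by (rule DERIV_unique[rotated])
qed

lemma integral_lower_limit_has_vector_derivative:
  fixes g :: "real \<Rightarrow> 'a::banach"
  assumes "continuous_on {a..b} g" "x \<in> {a<..<b}"
  shows "((\<lambda>y. integral {y..b} g) has_vector_derivative - g x) (at x)"
proof -
  have "at x within {a..b} = at x"
    using assms(2) by (intro at_within_interior) auto
  then show ?thesis
    using integral_has_vector_derivative'[OF assms(1), of x] assms(2) by simp
qed

lemma integral_sum_scaleR:
  fixes f :: "'n::euclidean_space \<Rightarrow> 'a::banach" and N :: nat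
  assumes "\<And>e. (\<lambda>u. c e u *\<^sub>R f u) integrable_on S"
  shows "integral S (\<lambda>u. (\<Sum>e\<le>N. w e * c e u) *\<^sub>R f u) = (\<Sum>e\<le>N. w e *\<^sub>R integral S (\<lambda>u. c e u *\<^sub>R f u))"
  using assms by (simp add: scaleR_sum_left integral_sum integrable_cmul flip: scaleR_scaleR)

lemma has_vector_derivative_integral_poly_family:
  fixes f :: "real \<Rightarrow> 'a::banach"
  assumes P: "continuous_poly_family P" and f: "continuous_on {a..b} f" and t: "b - t \<in> {a<..<b}"
  shows "((\<lambda>s. integral {b - s..b} (\<lambda>u. poly (P u) s *\<^sub>R f u)) has_vector_derivative
      integral {b - t..b} (\<lambda>u. poly (pderiv (P u)) t *\<^sub>R f u) + poly (P (b - t)) t *\<^sub>R f (b - t)) (at t)"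
proof -
  obtain N where deg: "\<And>u. degree (P u) \<le> N" and cont: "\<And>e. continuous_on UNIV (\<lambda>u. coeff (P u) e)"
    using P unfolding continuous_poly_family_def by blast
  \<comment> \<open>Expanding the weight in powers of \<open>s\<close>, the integral becomes \<open>\<Sum>e\<le>N. s ^ e *\<^sub>R \<Psi> e (b - s)\<close>.\<close>
  define \<Psi> where "\<Psi> e x = integral {x..b} (\<lambda>u. coeff (P u) e *\<^sub>R f u)" for e x
  have cont_e: "continuous_on {a..b} (\<lambda>u. coeff (P u) e *\<^sub>R f u)" for e
    by (intro continuous_intros continuous_on_subset[OF cont] f) auto
  have split: "integral {x..b} (\<lambda>u. (\<Sum>e\<le>N. w e * coeff (P u) e) *\<^sub>R f u) = (\<Sum>e\<le>N. w e *\<^sub>R \<Psi> e x)"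
    if "x \<in> {a..b}" for w x
    unfolding \<Psi>_def using that
    by (intro integral_sum_scaleR integrable_continuous_interval continuous_on_subset[OF cont_e]) auto
  have deriv: "((\<lambda>s. \<Sum>e\<le>N. s ^ e *\<^sub>R \<Psi> e (b - s)) has_vector_derivative
      (\<Sum>e\<le>N. t ^ e *\<^sub>R (coeff (P (b - t)) e *\<^sub>R f (b - t)) + (of_nat e * t ^ (e - 1)) *\<^sub>R \<Psi> e (b - t))) (at t)"
  proof (intro has_vector_derivative_sum has_vector_derivative_scaleR)
    fix e
    have "((\<lambda>s. b - s) has_vector_derivative -1) (at t)"
      by (auto intro!: derivative_eq_intros)
    moreover have "(\<Psi> e has_vector_derivative - (coeff (P (b - t)) e *\<^sub>R f (b - t))) (at (b - t))"
      unfolding \<Psi>_def by (rule integral_lower_limit_has_vector_derivative[OF cont_e t])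
    ultimately show "((\<lambda>s. \<Psi> e (b - s)) has_vector_derivative coeff (P (b - t)) e *\<^sub>R f (b - t)) (at t)"
      using vector_diff_chain_at by (fastforce simp: o_def)
  qed (auto intro!: derivative_eq_intros)
  have "integral {b - t..b} (\<lambda>u. poly (pderiv (P u)) t *\<^sub>R f u)
      = (\<Sum>e\<le>N. (of_nat e * t ^ (e - 1)) *\<^sub>R \<Psi> e (b - t))"
    using split[of "b - t" "\<lambda>e. of_nat e * t ^ (e - 1)"] t
    by (simp add: poly_pderiv_eq_sum_upto[OF deg])
  moreover have "poly (P (b - t)) t *\<^sub>R f (b - t)
      = (\<Sum>e\<le>N. t ^ e *\<^sub>R (coeff (P (b - t)) e *\<^sub>R f (b - t)))"
    by (simp add: poly_eq_sum_upto[OF deg] scaleR_sum_left mult.commute)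
  ultimately have derivative_eq:
    "integral {b - t..b} (\<lambda>u. poly (pderiv (P u)) t *\<^sub>R f u) + poly (P (b - t)) t *\<^sub>R f (b - t)
      = (\<Sum>e\<le>N. t ^ e *\<^sub>R (coeff (P (b - t)) e *\<^sub>R f (b - t)) + (of_nat e * t ^ (e - 1)) *\<^sub>R \<Psi> e (b - t))"
    by (simp add: sum.distrib)
  have "(\<Sum>e\<le>N. s ^ e *\<^sub>R \<Psi> e (b - s)) = integral {b - s..b} (\<lambda>u. poly (P u) s *\<^sub>R f u)"
    if "s \<in> {0<..<b - a}" for s
    using that split[of "b - s" "\<lambda>e. s ^ e"] by (simp add: poly_eq_sum_upto[OF deg] mult.commute)
  then show ?thesis
    unfolding derivative_eq using t
    by (intro has_vector_derivative_transform_within_open[OF deriv, of "{0<..<b - a}"]) auto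
qed

section \<open>The integrals \<open>G\<^bsub>i,j\<^esub>\<close>\<close>

definition weight_poly :: "nat \<Rightarrow> nat \<Rightarrow> real \<Rightarrow> real poly" where
  "weight_poly i j u =
     [:u:] * (([:1, 1:]^2 - [:u^2:]) * ([:u^2:] - [:1, -1:]^2)) ^ i * ([:u^2 + 1:] - [:0, 1:]^2) ^ j"

lemma poly_weight_poly: "poly (weight_poly i j u) t = u * Qfun t u ^ i * (u^2 + 1 - t^2) ^ j"
  by (simp add: weight_poly_def Qfun_def algebra_simps)

lemma continuous_poly_family_weight_poly: "continuous_poly_family (weight_poly i j)"
  unfolding weight_poly_def
  by (intro continuous_poly_family_mult continuous_poly_family_power
      continuous_poly_family_diff continuous_poly_family_pCons continuous_poly_family_const continuous_intros)

lemma poly_pderiv_weight_poly: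
  "poly (pderiv (weight_poly i j u)) t =
     t * (4 * i * poly (weight_poly (i - 1) (j + 1) u) t - 2 * j * poly (weight_poly i (j - 1) u) t)"
proof -
  have Q: "((\<lambda>t. Qfun t u) has_real_derivative 4 * t * (u^2 + 1 - t^2)) (at t)"
    unfolding Qfun_def by (auto intro!: derivative_eq_intros simp: algebra_simps power2_eq_square)
  have "((\<lambda>t. poly (weight_poly i j u) t) has_real_derivative
      u * (i * Qfun t u ^ (i - 1) * (4 * t * (u^2 + 1 - t^2))) * (u^2 + 1 - t^2) ^ j
      + u * Qfun t u ^ i * (j * (u^2 + 1 - t^2) ^ (j - 1) * (- 2 * t))) (at t)"
    unfolding poly_weight_poly by (auto intro!: derivative_eq_intros Q)
  then have "((\<lambda>t. poly (weight_poly i j u) t) has_real_derivative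
      t * (4 * i * poly (weight_poly (i - 1) (j + 1) u) t - 2 * j * poly (weight_poly i (j - 1) u) t)) (at t)"
    by (simp add: poly_weight_poly algebra_simps)
  from DERIV_unique[OF poly_DERIV this] show ?thesis
    by simp
qed

lemma Gfun_weight_poly:
  "Gfun f i j t = integral {1 - t..1} (\<lambda>u. poly (weight_poly i j u) t *\<^sub>R f u)"
  by (simp add: Gfun_def poly_weight_poly scaleR_conv_of_real)

lemma Gfun_has_vector_derivative:
  assumes f: "continuous_on {0..1} f" and t: "t \<in> {0<..<1}"
  shows "(Gfun f i j has_vector_derivative
      of_real t * (of_nat (4 * i) * Gfun f (i - 1) (j + 1) t - of_nat (2 * j) * Gfun f i (j - 1) t)
      + of_real (poly (weight_poly i j (1 - t)) t) * f (1 - t)) (at t)"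
proof -
  have integrable: "(\<lambda>u. poly (weight_poly i' j' u) t *\<^sub>R f u) integrable_on {1 - t..1}" for i' j'
    using t unfolding poly_weight_poly Qfun_def
    by (intro integrable_continuous_interval continuous_intros continuous_on_subset[OF f]) auto
  have "integral {1 - t..1} (\<lambda>u. poly (pderiv (weight_poly i j u)) t *\<^sub>R f u)
      = integral {1 - t..1} (\<lambda>u. (t * (4 * real i)) *\<^sub>R (poly (weight_poly (i - 1) (j + 1) u) t *\<^sub>R f u)
          - (t * (2 * real j)) *\<^sub>R (poly (weight_poly i (j - 1) u) t *\<^sub>R f u))"
    by (simp add: poly_pderiv_weight_poly algebra_simps)
  also have "\<dots> = (t * (4 * real i)) *\<^sub>R Gfun f (i - 1) (j + 1) t - (t * (2 * real j)) *\<^sub>R Gfun f i (j - 1) t"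
    by (simp only: integral_diff[OF integrable_cmul[OF integrable] integrable_cmul[OF integrable]]
        integral_cmul Gfun_weight_poly)
  also have "\<dots> = of_real t * (of_nat (4 * i) * Gfun f (i - 1) (j + 1) t - of_nat (2 * j) * Gfun f i (j - 1) t)"
    by (simp add: scaleR_conv_of_real algebra_simps)
  finally have integral_pderiv: "integral {1 - t..1} (\<lambda>u. poly (pderiv (weight_poly i j u)) t *\<^sub>R f u) = \<dots>" .
  have "(Gfun f i j has_vector_derivative integral {1 - t..1} (\<lambda>u. poly (pderiv (weight_poly i j u)) t *\<^sub>R f u)
      + poly (weight_poly i j (1 - t)) t *\<^sub>R f (1 - t)) (at t)"
    using has_vector_derivative_integral_poly_family[OF continuous_poly_family_weight_poly f, of t] t
    by (simp add: Gfun_weight_poly[abs_def])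
  then show ?thesis
    unfolding integral_pderiv by (simp add: scaleR_conv_of_real)
qed

lemma Dop_Gfun_Suc:
  assumes "continuous_on {0..1} f" "t \<in> {0<..<1}"
  shows "Dop (Gfun f (Suc i) j) t =
    of_nat (4 * Suc i) * Gfun f i (j + 1) t + (- of_nat (2 * j)) * Gfun f (Suc i) (j - 1) t"
proof -
  have "poly (weight_poly (Suc i) j (1 - t)) t = 0"
    by (simp add: poly_weight_poly Qfun_def)
  then show ?thesis
    using Dop_eq[OF Gfun_has_vector_derivative[OF assms, of "Suc i" j]] assms(2) by simp
qed

lemma smooth_on_Gfun:
  assumes "continuous_on {0..1} f" "smooth_on {0<..<1} (\<lambda>t. f (1 - t))"
  shows "smooth_on {0<..<1} (Gfun f i j)"
proof -
  have "\<forall>i j. times_differentiable_on n {0<..<1} (Gfun f i j)" for n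
  proof (induction n)
    case (Suc n)
    show ?case
    proof (intro allI)
      fix i j
      let ?G' = "\<lambda>t. of_real t * (of_nat (4 * i) * Gfun f (i - 1) (j + 1) t - of_nat (2 * j) * Gfun f i (j - 1) t)
        + of_real (poly (weight_poly i j (1 - t)) t) * f (1 - t)"
      have "times_differentiable_on n {0<..<1} ?G'"
        using Suc.IH assms(2) unfolding smooth_on_def poly_weight_poly Qfun_def
        by (intro times_differentiable_on_intros) auto
      moreover have "\<forall>t\<in>{0<..<1}. (Gfun f i j has_vector_derivative ?G' t) (at t)"
        using Gfun_has_vector_derivative[OF assms(1)] by blast
      ultimately show "times_differentiable_on (Suc n) {0<..<1} (Gfun f i j)"
        by auto
    qed
  qed simp
  then show ?thesis
    unfolding smooth_on_def by blast
qed

section \<open>Expansion coefficients\<close>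

text \<open>
  \<open>expansion_coeff a j r\<close> is the sum, over all ways of unwinding the recursion
  \<open>D G\<^bsub>a+1,j\<^esub> = 4(a+1) G\<^bsub>a,j+1\<^esub> - 2j G\<^bsub>a+1,j-1\<^esub>\<close> from \<open>G\<^bsub>a,j\<^esub>\<close> down to
  first index 0 with exactly \<open>r\<close> steps of the second kind, of the product of the factors \<open>j\<close>
  met in those steps.
\<close>
fun expansion_coeff :: "nat \<Rightarrow> nat \<Rightarrow> nat \<Rightarrow> nat" where
  "expansion_coeff a j 0 = 1"
| "expansion_coeff 0 j (Suc r) = 0"
| "expansion_coeff (Suc a) j (Suc r) =
     expansion_coeff a (Suc j) (Suc r) + j * expansion_coeff (Suc a) (j - 1) r"

lemma expansion_coeff_1_Suc:
  "expansion_coeff 1 j (Suc r) + r * expansion_coeff 1 j r = j * expansion_coeff 1 j r"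
proof (induction r arbitrary: j)
  case (Suc r)
  show ?case
  proof (cases j)
    case (Suc j')
    have "j * (expansion_coeff 1 j' (Suc r) + r * expansion_coeff 1 j' r) = j * (j' * expansion_coeff 1 j' r)"
      using Suc.IH[of j'] by simp
    then show ?thesis
      using Suc by (simp add: algebra_simps)
  qed simp
qed simp

lemma expansion_coeff_shift:
  "expansion_coeff (Suc a) j (Suc r) + r * expansion_coeff (Suc a) j r
     = expansion_coeff a j (Suc r) + (j + a) * expansion_coeff (Suc a) j r"
proof (induction "a + r" arbitrary: a j r rule: less_induct)
  case less
  show ?case
  proof (cases a)
    case 0
    then show ?thesis
      using expansion_coeff_1_Suc[of j r] by simp
  next
    case (Suc a')
    show ?thesis
    proof (cases r)
      case 0
      show ?thesis
        using less[of a' 0 "Suc j"] Suc 0 by simp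
    next
      case (Suc r')
      have IH1: "expansion_coeff a (Suc j) (Suc r) + r * expansion_coeff a (Suc j) r
         = expansion_coeff a' (Suc j) (Suc r) + (j + a) * expansion_coeff a (Suc j) r"
        using less[of a' r "Suc j"] \<open>a = Suc a'\<close> by simp
      show ?thesis
      proof (cases j)
        case 0
        then show ?thesis
          using IH1 \<open>a = Suc a'\<close> \<open>r = Suc r'\<close> by simp
      next
        case (Suc j')
        have N1: "expansion_coeff (Suc a) j (Suc r)
            = expansion_coeff a (Suc j) (Suc r) + j * expansion_coeff (Suc a) j' r"
          unfolding \<open>j = Suc j'\<close> by simp
        have N2: "expansion_coeff (Suc a) j r
            = expansion_coeff a (Suc j) r + j * expansion_coeff (Suc a) j' r'"
          unfolding \<open>r = Suc r'\<close> \<open>j = Suc j'\<close> by simp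
        have N3: "expansion_coeff a j (Suc r)
            = expansion_coeff a' (Suc j) (Suc r) + j * expansion_coeff a j' r"
          unfolding \<open>a = Suc a'\<close> \<open>j = Suc j'\<close> by simp
        have "expansion_coeff (Suc a) j' r + r' * expansion_coeff (Suc a) j' r'
           = expansion_coeff a j' r + (j' + a) * expansion_coeff (Suc a) j' r'"
          using less[of a r' j'] \<open>r = Suc r'\<close> by simp
        then have IH2: "j * (expansion_coeff (Suc a) j' r + r' * expansion_coeff (Suc a) j' r')
           = j * (expansion_coeff a j' r + (j' + a) * expansion_coeff (Suc a) j' r')"
          by (simp only:)
        show ?thesis
          unfolding N1 N2 N3 using IH1 IH2 \<open>j = Suc j'\<close> \<open>r = Suc r'\<close>
          by (simp del: expansion_coeff.simps add: algebra_simps)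
      qed
    qed
  qed
qed

lemma expansion_coeff_eq_0: "a + j \<le> Suc r \<Longrightarrow> expansion_coeff a j (Suc r) = 0"
proof (induction a j "Suc r" arbitrary: r rule: expansion_coeff.induct)
  case (3 a j r)
  then show ?case by (cases r) auto
qed simp

lemma expansion_coeff_Bessel:
  "r \<le> a \<Longrightarrow> expansion_coeff (Suc a) 0 r * 2 ^ r * fact (a - r) * fact r = fact (a + r)"
proof (induction a arbitrary: r)
  case 0
  then show ?case by simp
next
  case (Suc a)
  note IH_a = Suc.IH
  show ?case
    using \<open>r \<le> Suc a\<close>
  proof (induction r)
    case 0
    then show ?case by simp
  next
    case (Suc r)
    then obtain d where a: "a = r + d" using le_Suc_ex by auto
    define X Y Z where "X = expansion_coeff (Suc (Suc a)) 0 (Suc r)"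
      and "Y = expansion_coeff (Suc (Suc a)) 0 r" and "Z = expansion_coeff (Suc a) 0 (Suc r)"
    have "X + r * Y = Z + (r + d + 1) * Y"
      using expansion_coeff_shift[of "Suc a" 0 r] a by (simp del: expansion_coeff.simps add: X_def Y_def Z_def)
    then have X: "X = Z + (d + 1) * Y"
      by (simp add: algebra_simps)
    have Y: "Y * 2 ^ r * ((d + 1) * fact d) * fact r = fact (a + r + 1)"
      using Suc.IH Suc.prems a by (simp add: Y_def algebra_simps)
    have Z: "Z * 2 ^ Suc r * fact d * fact (Suc r) = d * fact (a + r + 1)"
    proof (cases d)
      case 0
      then show ?thesis using expansion_coeff_eq_0[of "Suc a" 0 r] a by (simp add: Z_def)
    next
      case (Suc d')
      then have "Z * 2 ^ Suc r * fact d' * fact (Suc r) = fact (a + r + 1)"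
        using IH_a[of "Suc r"] a by (simp del: expansion_coeff.simps add: Z_def)
      moreover have "fact d = d * fact d'"
        using Suc by simp
      ultimately show ?thesis
        by (metis mult.assoc mult.left_commute)
    qed
    have "X * 2 ^ Suc r * fact d * fact (Suc r)
        = Z * 2 ^ Suc r * fact d * fact (Suc r) + 2 * (r + 1) * (Y * 2 ^ r * ((d + 1) * fact d) * fact r)"
      unfolding X by (simp add: algebra_simps)
    also have "\<dots> = (a + r + 2) * fact (a + r + 1)"
      unfolding Y Z using a by (simp add: algebra_simps)
    finally show ?case
      using a by (simp del: expansion_coeff.simps add: X_def)
  qed
qed

lemma expansion_coeff_sum_Suc:
  fixes T :: "nat \<Rightarrow> 'a::comm_semiring_1"
  shows "(\<Sum>r\<le>Suc a + j. of_nat (expansion_coeff (Suc a) j r) * T r)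
    = (\<Sum>r\<le>a + Suc j. of_nat (expansion_coeff a (Suc j) r) * T r)
      + of_nat j * (\<Sum>r\<le>Suc a + (j - 1). of_nat (expansion_coeff (Suc a) (j - 1) r) * T (Suc r))"
proof (cases j)
  case 0
  then show ?thesis
    by (simp add: sum.atMost_Suc_shift del: sum.atMost_Suc)
next
  case (Suc j')
  then show ?thesis
    by (simp add: sum.atMost_Suc_shift sum.distrib sum_distrib_left algebra_simps del: sum.atMost_Suc)
qed

lemma of_nat_expansion_coeff_Bessel:
  assumes "r \<le> a"
  shows "of_nat (expansion_coeff (Suc a) 0 r) * (- 2) ^ r
    = (of_real ((- 1) ^ r * fact (a + r) / (fact (a - r) * fact r)) :: 'a::real_field)"
proof -
  have "real (expansion_coeff (Suc a) 0 r * 2 ^ r * fact (a - r) * fact r) = real (fact (a + r))"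
    using expansion_coeff_Bessel[OF assms] by (rule arg_cong)
  then have "real (expansion_coeff (Suc a) 0 r) * 2 ^ r * (fact (a - r) * fact r) = fact (a + r)"
    by (simp add: mult.assoc)
  then have "real (expansion_coeff (Suc a) 0 r) * (- 2) ^ r = (- 1) ^ r * fact (a + r) / (fact (a - r) * fact r)"
    by (simp add: eq_divide_eq power_minus' mult_ac)
  then have "of_real (real (expansion_coeff (Suc a) 0 r) * (- 2) ^ r)
      = (of_real ((- 1) ^ r * fact (a + r) / (fact (a - r) * fact r)) :: 'a)"
    by (rule arg_cong)
  then show ?thesis
    by simp
qed

section \<open>Iterates of \<open>D\<close> on \<open>G\<^bsub>a,j\<^esub>\<close>\<close>

lemma funpow_Dop_Gfun_Suc:
  assumes f: "continuous_on {0..1} f" and f_smooth: "smooth_on {0<..<1} (\<lambda>t. f (1 - t))"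
    and t: "t \<in> {0<..<1}"
  shows "(Dop ^^ Suc n) (Gfun f (Suc a) j) t = of_nat (4 * Suc a) * (Dop ^^ n) (Gfun f a (j + 1)) t
    - of_nat (2 * j) * (Dop ^^ n) (Gfun f (Suc a) (j - 1)) t"
proof -
  have S: "open {0<..<1::real}" "(0::real) \<notin> {0<..<1}"
    by auto
  have "(Dop ^^ Suc n) (Gfun f (Suc a) j) t = (Dop ^^ n) (Dop (Gfun f (Suc a) j)) t"
    by (simp add: funpow_Suc_right del: funpow.simps)
  also have "\<dots> = (Dop ^^ n)
      (\<lambda>s. of_nat (4 * Suc a) * Gfun f a (j + 1) s + (- of_nat (2 * j)) * Gfun f (Suc a) (j - 1) s) t"
    using Dop_Gfun_Suc[OF f] t by (intro funpow_Dop_cong[OF S(1)])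
  also have "\<dots> = of_nat (4 * Suc a) * (Dop ^^ n) (Gfun f a (j + 1)) t
      + (- of_nat (2 * j)) * (Dop ^^ n) (Gfun f (Suc a) (j - 1)) t"
    using smooth_on_Gfun[OF f f_smooth] t by (intro funpow_Dop_linear[OF S])
  finally show ?thesis
    by simp
qed

lemma funpow_Dop_Gfun:
  assumes f: "continuous_on {0..1} f" and f_smooth: "smooth_on {0<..<1} (\<lambda>t. f (1 - t))"
    and t: "t \<in> {0<..<1}"
  shows "2 * a + j \<le> n \<Longrightarrow> (Dop ^^ n) (Gfun f a j) t = of_nat (4 ^ a * fact a) *
    (\<Sum>r\<le>a + j. of_nat (expansion_coeff a j r) * (- 2) ^ r * (Dop ^^ (n - a - r)) (Gfun f 0 (a + j - r)) t)"
proof (induction n arbitrary: a j)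
  case (Suc m)
  show ?case
  proof (cases a)
    case (Suc a')
    define K where "K = (of_nat (4 ^ a * fact a) :: complex)"
    define T where "T r = (- 2) ^ r * (Dop ^^ (Suc m - a - r)) (Gfun f 0 (a + j - r)) t" for r
    define S1 where "S1 = (\<Sum>r\<le>a' + Suc j. of_nat (expansion_coeff a' (Suc j) r) * T r)"
    define S2 where "S2 = (\<Sum>r\<le>a + (j - 1). of_nat (expansion_coeff a (j - 1) r) * T (Suc r))"
    have IH1: "of_nat (4 * a) * (Dop ^^ m) (Gfun f a' (j + 1)) t = K * S1"
      using Suc.IH[of a' "j + 1"] Suc.prems \<open>a = Suc a'\<close>
      by (simp add: K_def S1_def T_def algebra_simps del: sum.atMost_Suc)
    have IH2: "of_nat (2 * j) * (Dop ^^ m) (Gfun f a (j - 1)) t = - K * (of_nat j * S2)"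
    proof (cases j)
      case (Suc j')
      then show ?thesis
        using Suc.IH[of a j'] Suc.prems
        by (simp add: K_def S2_def T_def sum_distrib_left algebra_simps del: sum.atMost_Suc)
    qed simp
    have "(Dop ^^ Suc m) (Gfun f a j) t
        = of_nat (4 * a) * (Dop ^^ m) (Gfun f a' (j + 1)) t - of_nat (2 * j) * (Dop ^^ m) (Gfun f a (j - 1)) t"
      using funpow_Dop_Gfun_Suc[OF f f_smooth t, of m a' j] \<open>a = Suc a'\<close> by simp
    also have "\<dots> = K * (S1 + of_nat j * S2)"
      unfolding IH1 IH2 by (simp add: algebra_simps)
    also have "S1 + of_nat j * S2 = (\<Sum>r\<le>a + j. of_nat (expansion_coeff a j r) * T r)"
      unfolding S1_def S2_def \<open>a = Suc a'\<close> by (rule expansion_coeff_sum_Suc[symmetric])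
    finally show ?thesis
      by (simp add: K_def T_def mult.assoc)
  qed (simp add: sum.atMost_shift)
qed simp

lemma funpow_Dop_Gfun_diagonal:
  assumes f: "continuous_on {0..1} f" and f_smooth: "smooth_on {0<..<1} (\<lambda>t. f (1 - t))"
    and t: "t \<in> {0<..<1}" and k: "k \<ge> 1"
  shows "(Dop ^^ (2 * k)) (Gfun f k 0) t = of_real (fact k * 4 ^ k) *
    (\<Sum>j = 0..k - 1. of_real ((- 1) ^ j * fact (k - 1 + j) / (fact (k - 1 - j) * fact j))
      * (Dop ^^ (k - j)) (Gfun f 0 (k - j)) t)"
proof -
  obtain a where a: "k = Suc a"
    using k by (cases k) auto
  define D where "D j = (Dop ^^ (k - j)) (Gfun f 0 (k - j)) t" for j
  have "(Dop ^^ (2 * k)) (Gfun f k 0) t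
      = of_nat (4 ^ k * fact k) * (\<Sum>j\<le>Suc a. of_nat (expansion_coeff k 0 j) * (- 2) ^ j * D j)"
    using funpow_Dop_Gfun[OF f f_smooth t, of k 0 "2 * k"] a by (simp add: D_def)
  also have "\<dots> = of_nat (4 ^ k * fact k) *
      (\<Sum>j\<le>a. of_real ((- 1) ^ j * fact (a + j) / (fact (a - j) * fact j)) * D j)"
  proof -
    have "expansion_coeff k 0 (Suc a) = 0"
      using expansion_coeff_eq_0[of k 0 a] a by simp
    moreover have "(\<Sum>j\<le>a. of_nat (expansion_coeff k 0 j) * (- 2) ^ j * D j)
        = (\<Sum>j\<le>a. of_real ((- 1) ^ j * fact (a + j) / (fact (a - j) * fact j)) * D j)"
      by (rule sum.cong) (simp_all add: a of_nat_expansion_coeff_Bessel)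
    ultimately show ?thesis
      by simp
  qed
  finally have expansion: "(Dop ^^ (2 * k)) (Gfun f k 0) t = of_nat (4 ^ k * fact k) *
      (\<Sum>j\<le>a. of_real ((- 1) ^ j * fact (a + j) / (fact (a - j) * fact j)) * D j)" .
  have "k - 1 = a"
    using a by simp
  then show ?thesis
    unfolding atLeast0AtMost D_def[symmetric] expansion by (simp add: mult.commute)
qed

theorem theorem3p7:
  fixes f :: "real \<Rightarrow> complex" and \<rho> :: real and k :: nat and t :: real
  assumes "smooth_on_nonneg f"
    and "\<rho> < 1"
    and "\<forall>u\<ge>0. u \<notin> {0..\<rho>} \<longrightarrow> f u = 0"
    and "k \<ge> 1"
    and "0 < t" and "t < 1"
  shows "(Dop ^^ (2*k)) (hfun f k) t = (Dop ^^ (2*k)) (Gfun f k 0) t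
    \<and> (Dop ^^ (2*k)) (Gfun f k 0) t =
        of_real (fact k * 4 ^ k) *
        (\<Sum>j = 0..k-1. of_real ((-1) ^ j * fact (k - 1 + j) / (fact (k - 1 - j) * fact j))
            * (Dop ^^ (k - j)) (Gfun f 0 (k - j)) t)"
proof -
  have f: "continuous_on {0..1} f"
    using smooth_on_nonneg_continuous_on[OF assms(1)] by (rule continuous_on_subset) auto
  have f_smooth: "smooth_on {0<..<1} (\<lambda>t. f (1 - t))"
    using smooth_on_nonneg_reflect[OF assms(1), of 1] by (rule smooth_on_subset) auto
  have "hfun f k = Gfun f k 0"
    by (simp add: fun_eq_iff hfun_def Gfun_def)
  then show ?thesis
    using funpow_Dop_Gfun_diagonal[OF f f_smooth _ assms(4)] assms(5,6) by simp
qed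

end
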